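(* Let $n\ge 2$, $m\ge 1$ and $j\ge 1$ be integers, and for $y>0$ let $D_{m+1}(y)$ be the determinant of the $(m+1)\times(m+1)$ Hankel matrix whose $(i,k)$ entry, for $0\le i,k\le m$, is $\psi_2^{(n+(i+k)j)}(y)$. Then $y\mapsto(-1)^{(n+1)(m+1)}D_{m+1}(y)$ is completely monotonic on $(0,\infty)$.
   Context: For an integer $n\ge 2$ and $x>0$, the poly-double gamma function is defined by $$\psi_2^{(n)}(x)=(-1)^{n+1}\,n!\sum_{k=0}^{\infty}\frac{1+k}{(x+k)^{n+1}} .$$ A real-valued $C^\infty$ function $f$ on $(0,\infty)$ is called completely monotonic if $(-1)^k f^{(k)}(x)\ge 0$ for all integers $k\ge 0$ and all $x>0$. *)

theory Defs
  imports "HOL-Analysis.Analysis" "HOL-Combinatorics.Permutations"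
begin

definition psi2 :: "nat \<Rightarrow> real \<Rightarrow> real" where
  "psi2 n x = (-1) ^ (n + 1) * fact n * (\<Sum>k. (1 + real k) / (x + real k) ^ (n + 1))"

definition det_nat :: "nat \<Rightarrow> (nat \<Rightarrow> nat \<Rightarrow> real) \<Rightarrow> real" where
  "det_nat N A = (\<Sum>p | p permutes {..<N}. of_int (sign p) * (\<Prod>i<N. A i (p i)))"

definition completely_monotonic :: "(real \<Rightarrow> real) \<Rightarrow> bool" where
  "completely_monotonic f \<longleftrightarrow>
     (\<forall>k. \<forall>x>0. (deriv ^^ k) f differentiable (at x)) \<and>
     (\<forall>k. \<forall>x>0. (-1) ^ k * (deriv ^^ k) f x \<ge> 0)"

end

theory Submission
  imports Defs "HOL-Probability.Distributions"
begin

text \<open>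
  Up to sign, psi2 (n + p) y is mu p y = (n + p)! zeta2 (n + p + 1) y, where zeta2 is Barnes'
  double zeta function with periods (1, 1). For fixed y > 0 the numbers mu p y are the moments
  of the positive measure on (0, oo) given by the sum over k of (1 + k) n! / (y + k)^(n+1) times
  the Erlang(n, y + k) distribution, and d/dy mu p = - mu (p + 1). Once the signs are removed,
  the determinant is the Hankel determinant det [mu ((i + k) j)], which by Heine's identity is
  1/N! times the integral of det [x_i^(k j)]^2 over the N-fold product measure. Differentiating
  K times in y multiplies the integrand by (-(x_1 + ... + x_N))^K, so (-1)^K times the K-th
  derivative is the integral of a nonnegative function. Instead of forming product measures,
  the integrand is kept as a finite sum of monomials and integrated one variable at a time.
\<close>

text \<open>There are k + 1 pairs (a, b) of naturals with a + b = k, so this is the sum of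
  (y + a + b)^(-q) over all such pairs.\<close>
definition barnes_zeta2 :: "nat \<Rightarrow> real \<Rightarrow> real" where
  "barnes_zeta2 q y = (\<Sum>k. (1 + real k) / (y + real k) ^ q)"

lemma psi2_eq_barnes_zeta2: "psi2 n y = (-1) ^ (n + 1) * fact n * barnes_zeta2 (n + 1) y"
  by (simp add: psi2_def barnes_zeta2_def)

lemma summable_barnes_zeta2:
  assumes "0 < y" and "3 \<le> q"
  shows "summable (\<lambda>k. (1 + real k) / (y + real k) ^ q)"
proof (rule summable_comparison_test')
  show "summable (\<lambda>k. 2 * inverse (real k ^ (q - 1)))"
    using assms by (intro summable_mult inverse_power_summable) auto
next
  fix k :: nat assume "1 \<le> k"
  then have "(1 + real k) / (y + real k) ^ q \<le> (2 * real k) / real k ^ q"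
    using assms by (intro frac_le power_mono) auto
  also have "\<dots> = 2 * inverse (real k ^ (q - 1))"
    using \<open>1 \<le> k\<close> \<open>3 \<le> q\<close> by (cases q) (auto simp: field_simps)
  finally show "norm ((1 + real k) / (y + real k) ^ q) \<le> 2 * inverse (real k ^ (q - 1))"
    using assms by simp
qed

lemma has_real_derivative_divide_power:
  fixes a c :: real
  assumes "0 < x + a"
  shows "((\<lambda>x. c / (x + a) ^ q) has_real_derivative - (real q * (c / (x + a) ^ Suc q))) (at x)"
proof -
  have "((\<lambda>x. c * inverse ((x + a) ^ q)) has_real_derivative
          c * - (inverse ((x + a) ^ q) * (real q * (x + a) ^ (q - 1) * 1) * inverse ((x + a) ^ q))) (at x)"
    using assms by (auto intro!: derivative_eq_intros)
  moreover have "c * - (inverse (z ^ q) * (real q * z ^ (q - 1) * 1) * inverse (z ^ q))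
      = - (real q * (c / z ^ Suc q))" if "z \<noteq> 0" for z :: real
    using that by (cases q) (simp_all add: field_simps)
  ultimately show ?thesis
    using assms by (simp only: divide_inverse[of c] DERIV_cong)
qed

lemma has_real_derivative_barnes_zeta2:
  assumes "0 < y" and "3 \<le> q"
  shows "(barnes_zeta2 q has_real_derivative - (real q * barnes_zeta2 (Suc q) y)) (at y)"
proof -
  define f where "f k x = (1 + real k) / (x + real k) ^ q" for k x
  define f' where "f' k x = - (real q * ((1 + real k) / (x + real k) ^ Suc q))" for k x
  have "(f k has_field_derivative f' k x) (at x within {y/2..})" if "x \<in> {y/2..}" for k x
    using that assms unfolding f_def f'_def
    by (intro has_field_derivative_at_within[OF has_real_derivative_divide_power]) auto
  moreover have "uniformly_convergent_on {y/2..} (\<lambda>N x. \<Sum>k<N. f' k x)"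
  proof (rule Weierstrass_m_test')
    show "summable (\<lambda>k. real q * ((1 + real k) / (y/2 + real k) ^ Suc q))"
      using summable_barnes_zeta2[of "y/2" "Suc q"] assms by (intro summable_mult) auto
    fix k x assume "x \<in> {y/2..}"
    then have le: "(1 + real k) / (x + real k) ^ Suc q \<le> (1 + real k) / (y/2 + real k) ^ Suc q"
      using \<open>0 < y\<close> by (intro divide_left_mono power_mono mult_pos_pos) auto
    have nonneg: "0 \<le> (1 + real k) / (x + real k) ^ Suc q"
      using \<open>x \<in> {y/2..}\<close> \<open>0 < y\<close> by simp
    show "norm (f' k x) \<le> real q * ((1 + real k) / (y/2 + real k) ^ Suc q)"
      using mult_left_mono[OF le, of "real q"]
      by (simp only: f'_def real_norm_def abs_minus_cancel abs_mult abs_of_nat abs_of_nonneg[OF nonneg])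
  qed
  moreover have "summable (\<lambda>k. f k y)"
    unfolding f_def using assms by (rule summable_barnes_zeta2)
  ultimately have "((\<lambda>x. \<Sum>k. f k x) has_field_derivative (\<Sum>k. f' k y)) (at y)"
    using assms by (intro has_field_derivative_series'(2)[of "{y/2..}"]) auto
  moreover have "(\<Sum>k. f' k y) = - (real q * barnes_zeta2 (Suc q) y)"
  proof -
    have "summable (\<lambda>k. (1 + real k) / (y + real k) ^ Suc q)"
      using assms by (intro summable_barnes_zeta2) auto
    then show ?thesis
      unfolding f'_def barnes_zeta2_def
      by (simp only: suminf_minus[OF summable_mult] suminf_mult)
  qed
  ultimately show ?thesis
    by (simp add: f_def barnes_zeta2_def[abs_def])
qed

lemma has_bochner_integral_erlang_moment:
  assumes "0 < l"
  shows "has_bochner_integral (density lborel (erlang_density n l)) (\<lambda>x. x ^ p)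
           (fact (n + p) / (fact n * l ^ p))"
proof (rule has_bochner_integral_nn_integral)
  show "AE x in density lborel (erlang_density n l). 0 \<le> x ^ p"
    by (subst AE_density) (auto simp: erlang_density_def)
  have "(\<lambda>x. ennreal (erlang_density n l x) * ennreal (x ^ p))
      = (\<lambda>x. ennreal (erlang_density n l x * x ^ p))"
    using assms by (simp add: ennreal_mult')
  then show "(\<integral>\<^sup>+ x. ennreal (x ^ p) \<partial>density lborel (erlang_density n l))
      = ennreal (fact (n + p) / (fact n * l ^ p))"
    using nn_integral_erlang_ith_moment[OF assms, of n p]
    by (subst nn_integral_density) auto
qed (use assms in auto)

text \<open>The moment sequence of the measure \<open>\<Sum>\<^sub>k a k \<cdot> M k\<close> on (0, oo); the measure is kept
  as a countable family so that no infinite sum of measures has to be formed.\<close>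
definition stieltjes_moment_sequence :: "(nat \<Rightarrow> real) \<Rightarrow> bool" where
  "stieltjes_moment_sequence \<nu> \<longleftrightarrow>
     (\<exists>a (M :: nat \<Rightarrow> real measure). (\<forall>k. 0 \<le> a k) \<and> (\<forall>k. AE x in M k. 0 < x) \<and>
        (\<forall>k p. integrable (M k) (\<lambda>x. x ^ p)) \<and>
        (\<forall>p. (\<lambda>k. a k * integral\<^sup>L (M k) (\<lambda>x. x ^ p)) sums \<nu> p))"

lemma stieltjes_moment_sequence_barnes_zeta2:
  assumes "0 < y" and "2 \<le> n"
  shows "stieltjes_moment_sequence (\<lambda>p. fact (n + p) * barnes_zeta2 (n + p + 1) y)"
proof -
  define a where "a k = (1 + real k) * fact n / (y + real k) ^ (n + 1)" for k
  define M where "M k = density lborel (erlang_density n (y + real k))" for k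
  have "0 \<le> a k" for k
    using assms by (simp add: a_def)
  moreover have "AE x in M k. 0 < x" for k
    using assms unfolding M_def
    by (subst AE_density) (auto simp: erlang_density_def not_less le_less)
  moreover have moment: "has_bochner_integral (M k) (\<lambda>x. x ^ p)
      (fact (n + p) / (fact n * (y + real k) ^ p))" for k p
    unfolding M_def using assms by (intro has_bochner_integral_erlang_moment) simp
  moreover have "(\<lambda>k. a k * integral\<^sup>L (M k) (\<lambda>x. x ^ p))
      sums (fact (n + p) * barnes_zeta2 (n + p + 1) y)" for p
  proof -
    have "(1 + real k) * fact n / z ^ (n + 1) * (fact (n + p) / (fact n * z ^ p))
        = fact (n + p) * ((1 + real k) / z ^ (n + p + 1))" if "0 < z" for k and z :: real
      using that by (simp add: field_simps power_add)
    then have "a k * integral\<^sup>L (M k) (\<lambda>x. x ^ p)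
        = fact (n + p) * ((1 + real k) / (y + real k) ^ (n + p + 1))" for k
      using assms unfolding a_def has_bochner_integral_integral_eq[OF moment] by simp
    moreover have "summable (\<lambda>k. (1 + real k) / (y + real k) ^ (n + p + 1))"
      using assms by (intro summable_barnes_zeta2) auto
    ultimately show ?thesis
      unfolding barnes_zeta2_def by (simp only:) (intro sums_mult summable_sums)
  qed
  ultimately show ?thesis
    unfolding stieltjes_moment_sequence_def using integrable.intros by blast
qed

text \<open>The polynomial with coefficient w c at the monomial with exponents e c, in N variables,
  where the p-th power of the i-th variable is read as f i p: \<open>f i p = t i ^ p\<close> evaluates it
  at t, and \<open>f i p = \<nu> p\<close> applies the product moment functional of \<open>\<nu>\<close> to it.\<close>
definition monomial_sum ::
    "nat \<Rightarrow> 'c set \<Rightarrow> ('c \<Rightarrow> real) \<Rightarrow> ('c \<Rightarrow> nat \<Rightarrow> nat) \<Rightarrow> (nat \<Rightarrow> nat \<Rightarrow> real) \<Rightarrow> real" where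
  "monomial_sum N S w e f = (\<Sum>c\<in>S. w c * (\<Prod>i<N. f i (e c i)))"

lemma monomial_sum_cong:
  "(\<And>i p. i < N \<Longrightarrow> f i p = f' i p) \<Longrightarrow> monomial_sum N S w e f = monomial_sum N S w e f'"
  unfolding monomial_sum_def by (intro sum.cong prod.cong) auto

lemma monomial_sum_Suc:
  "monomial_sum (Suc N) S w e f = monomial_sum N S (\<lambda>c. w c * f N (e c N)) e f"
  by (simp add: monomial_sum_def mult_ac)

lemma monomial_sum_moments_nonneg:
  assumes "stieltjes_moment_sequence \<nu>" and "finite S"
    and "\<And>t. (\<And>i. i < N \<Longrightarrow> 0 < t i) \<Longrightarrow> 0 \<le> monomial_sum N S w e (\<lambda>i p. t i ^ p)"
  shows "0 \<le> monomial_sum N S w e (\<lambda>_. \<nu>)"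
proof -
  obtain a and M :: "nat \<Rightarrow> real measure"
    where a: "\<And>k. 0 \<le> a k" and M: "\<And>k. AE x in M k. 0 < x"
      and integrable: "\<And>k p. integrable (M k) (\<lambda>x. x ^ p)"
      and sums: "\<And>p. (\<lambda>k. a k * integral\<^sup>L (M k) (\<lambda>x. x ^ p)) sums \<nu> p"
    using assms(1) unfolding stieltjes_moment_sequence_def by blast
  from assms(3) show ?thesis
  proof (induction N arbitrary: w)
    case 0
    then show ?case by (simp add: monomial_sum_def)
  next
    case (Suc N)
    define v where "v x c = w c * x ^ e c N" for x c
    have IH: "0 \<le> monomial_sum N S (v x) e (\<lambda>_. \<nu>)" if "0 < x" for x
    proof (rule Suc.IH)
      fix t :: "nat \<Rightarrow> real" assume "\<And>i. i < N \<Longrightarrow> 0 < t i"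
      then have "0 \<le> monomial_sum (Suc N) S w e (\<lambda>i p. (t(N := x)) i ^ p)"
        using \<open>0 < x\<close> by (intro Suc.prems) (auto simp: less_Suc_eq)
      also have "\<dots> = monomial_sum N S (v x) e (\<lambda>i p. t i ^ p)"
        unfolding monomial_sum_Suc v_def fun_upd_same by (intro monomial_sum_cong) auto
      finally show "0 \<le> monomial_sum N S (v x) e (\<lambda>i p. t i ^ p)" .
    qed
    define R where "R c = (\<Prod>i<N. \<nu> (e c i))" for c
    have nonneg: "0 \<le> a k * integral\<^sup>L (M k) (\<lambda>x. monomial_sum N S (v x) e (\<lambda>_. \<nu>))" for k
      using M[of k] IH by (intro mult_nonneg_nonneg a integral_nonneg_AE) (auto elim: eventually_mono)
    have "integral\<^sup>L (M k) (\<lambda>x. monomial_sum N S (v x) e (\<lambda>_. \<nu>))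
        = (\<Sum>c\<in>S. w c * R c * integral\<^sup>L (M k) (\<lambda>x. x ^ e c N))" for k
      using integrable
      by (simp add: monomial_sum_def v_def R_def integral_sum mult_ac)
    moreover have "(\<lambda>k. \<Sum>c\<in>S. w c * R c * (a k * integral\<^sup>L (M k) (\<lambda>x. x ^ e c N)))
        sums (\<Sum>c\<in>S. w c * R c * \<nu> (e c N))"
      using sums by (intro sums_sum sums_mult)
    ultimately have "(\<lambda>k. a k * integral\<^sup>L (M k) (\<lambda>x. monomial_sum N S (v x) e (\<lambda>_. \<nu>)))
        sums (\<Sum>c\<in>S. w c * R c * \<nu> (e c N))"
      by (simp add: sum_distrib_left mult_ac)
    with nonneg have "0 \<le> (\<Sum>c\<in>S. w c * R c * \<nu> (e c N))"
      by (rule sums_le[OF _ sums_zero])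
    then show ?case
      by (simp add: monomial_sum_Suc monomial_sum_def R_def mult_ac)
  qed
qed

definition index_lists :: "nat \<Rightarrow> nat \<Rightarrow> nat list set" where
  "index_lists K N = {ls. set ls \<subseteq> {..<N} \<and> length ls = K}"

lemma index_lists_0 [simp]: "index_lists 0 N = {[]}"
  by (auto simp: index_lists_def)

lemma sum_index_lists_Suc:
  "(\<Sum>ls\<in>index_lists (Suc K) N. F ls) = (\<Sum>ls\<in>index_lists K N. \<Sum>l<N. F (l # ls))"
proof -
  have "(\<Sum>ls\<in>index_lists (Suc K) N. F ls) = (\<Sum>(ls, l)\<in>index_lists K N \<times> {..<N}. F (l # ls))"
    unfolding index_lists_def lists_length_Suc_eq
    by (subst sum.reindex) (auto simp: inj_on_def case_prod_unfold)
  then show ?thesis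
    by (simp add: sum.cartesian_product)
qed

lemma sum_index_lists_power:
  fixes t :: "nat \<Rightarrow> real"
  shows "(\<Sum>ls\<in>index_lists K N. \<Prod>i<N. t i ^ count_list ls i) = (\<Sum>i<N. t i) ^ K"
proof (induction K)
  case 0
  then show ?case by simp
next
  case (Suc K)
  have "(\<Prod>i<N. t i ^ count_list (l # ls) i) = (\<Prod>i<N. (if i = l then t i else 1) * t i ^ count_list ls i)"
    for l ls by (intro prod.cong) auto
  then have "(\<Prod>i<N. t i ^ count_list (l # ls) i) = t l * (\<Prod>i<N. t i ^ count_list ls i)"
    if "l < N" for l ls
    using that by (simp add: prod.distrib prod.delta)
  then have "(\<Sum>ls\<in>index_lists (Suc K) N. \<Prod>i<N. t i ^ count_list ls i)
      = (\<Sum>ls\<in>index_lists K N. (\<Sum>l<N. t l) * (\<Prod>i<N. t i ^ count_list ls i))"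
    unfolding sum_index_lists_Suc sum_distrib_right by simp
  with Suc.IH show ?case
    by (simp add: sum_distrib_left[symmetric])
qed

lemma monomial_sum_index_lists:
  "monomial_sum N (S \<times> index_lists K N) (w \<circ> fst) (\<lambda>(c, ls) i. e c i + count_list ls i) f
     = (\<Sum>c\<in>S. w c * (\<Sum>ls\<in>index_lists K N. \<Prod>i<N. f i (e c i + count_list ls i)))"
  by (simp add: monomial_sum_def sum.cartesian_product sum_distrib_left case_prod_unfold)

lemma monomial_sum_index_lists_power:
  fixes t :: "nat \<Rightarrow> real"
  shows "monomial_sum N (S \<times> index_lists K N) (w \<circ> fst) (\<lambda>(c, ls) i. e c i + count_list ls i)
           (\<lambda>i p. t i ^ p)
         = monomial_sum N S w e (\<lambda>i p. t i ^ p) * (\<Sum>i<N. t i) ^ K"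
  unfolding monomial_sum_index_lists
  by (simp add: monomial_sum_def power_add prod.distrib sum_distrib_left sum_distrib_right
      sum_index_lists_power[symmetric] mult_ac)

lemma has_real_derivative_prod_shift:
  fixes g :: "nat \<Rightarrow> real \<Rightarrow> real" and N :: nat
  assumes "\<And>p. (g p has_real_derivative - g (Suc p) y) (at y)"
  shows "((\<lambda>y. \<Prod>i<N. g (a i) y) has_real_derivative
           - (\<Sum>l<N. \<Prod>i<N. g (a i + of_bool (i = l)) y)) (at y)"
proof -
  have shift: "(\<Prod>i<N. g (a i + of_bool (i = l)) y) = g (Suc (a l)) y * (\<Prod>i\<in>{..<N} - {l}. g (a i) y)"
    if "l \<in> {..<N}" for l
    using prod.remove[of "{..<N}" l "\<lambda>i. g (a i + of_bool (i = l)) y"] that by simp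
  have "((\<lambda>y. \<Prod>i<N. g (a i) y) has_real_derivative
      (\<Sum>l<N. - g (Suc (a l)) y * (\<Prod>i\<in>{..<N} - {l}. g (a i) y))) (at y)"
    by (rule has_field_derivative_prod) (rule assms)
  also have "(\<Sum>l<N. - g (Suc (a l)) y * (\<Prod>i\<in>{..<N} - {l}. g (a i) y))
      = - (\<Sum>l<N. \<Prod>i<N. g (a i + of_bool (i = l)) y)"
    unfolding sum_negf[symmetric] by (intro sum.cong) (simp_all add: shift)
  finally show ?thesis .
qed

lemma has_real_derivative_monomial_sum_index_lists:
  fixes g :: "nat \<Rightarrow> real \<Rightarrow> real"
  assumes "\<And>p. (g p has_real_derivative - g (Suc p) y) (at y)"
  shows "((\<lambda>y. monomial_sum N (S \<times> index_lists K N) (w \<circ> fst)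
              (\<lambda>(c, ls) i. e c i + count_list ls i) (\<lambda>_ p. g p y))
          has_real_derivative
            - monomial_sum N (S \<times> index_lists (Suc K) N) (w \<circ> fst)
              (\<lambda>(c, ls) i. e c i + count_list ls i) (\<lambda>_ p. g p y)) (at y)"
proof -
  have "(\<Sum>ls\<in>index_lists (Suc K) N. \<Prod>i<N. g (e c i + count_list ls i) y)
      = (\<Sum>ls\<in>index_lists K N. \<Sum>l<N. \<Prod>i<N. g (e c i + count_list ls i + of_bool (i = l)) y)" for c
    unfolding sum_index_lists_Suc by (intro sum.cong prod.cong refl) auto
  then have "- monomial_sum N (S \<times> index_lists (Suc K) N) (w \<circ> fst)
        (\<lambda>(c, ls) i. e c i + count_list ls i) (\<lambda>_ p. g p y)
      = (\<Sum>c\<in>S. w c * (\<Sum>ls\<in>index_lists K N.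
           - (\<Sum>l<N. \<Prod>i<N. g (e c i + count_list ls i + of_bool (i = l)) y)))"
    by (simp add: monomial_sum_index_lists sum_negf)
  moreover have "((\<lambda>y. monomial_sum N (S \<times> index_lists K N) (w \<circ> fst)
        (\<lambda>(c, ls) i. e c i + count_list ls i) (\<lambda>_ p. g p y)) has_real_derivative
      (\<Sum>c\<in>S. w c * (\<Sum>ls\<in>index_lists K N.
           - (\<Sum>l<N. \<Prod>i<N. g (e c i + count_list ls i + of_bool (i = l)) y)))) (at y)"
    unfolding monomial_sum_index_lists
    by (intro DERIV_sum DERIV_cmult has_real_derivative_prod_shift assms)
  ultimately show ?thesis
    by simp
qed

lemma completely_monotonicI:
  fixes F :: "nat \<Rightarrow> real \<Rightarrow> real"
  assumes deriv: "\<And>K y. 0 < y \<Longrightarrow> (F K has_real_derivative F (Suc K) y) (at y)"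
    and nonneg: "\<And>K y. 0 < y \<Longrightarrow> 0 \<le> (-1) ^ K * F K y"
  shows "completely_monotonic (F 0)"
proof -
  have deriv_cong: "(G has_real_derivative F (Suc K) y) (at y)"
    if "0 < y" and "\<And>x. 0 < x \<Longrightarrow> G x = F K x" for G K y
  proof -
    have "\<forall>\<^sub>F x in nhds y. G x = F K x"
      using eventually_nhds_in_open[of "{0<..}" y] \<open>0 < y\<close> that(2)
      by (auto elim: eventually_mono)
    then show ?thesis
      using deriv[OF \<open>0 < y\<close>] by (rule DERIV_cong_ev[OF refl _ refl, THEN iffD2])
  qed
  have iter: "(deriv ^^ K) (F 0) y = F K y" if "0 < y" for K y
    using that
  proof (induction K arbitrary: y)
    case (Suc K)
    then show ?case
      using DERIV_imp_deriv[OF deriv_cong[OF Suc.prems Suc.IH]] by simp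
  qed simp
  show ?thesis
    unfolding completely_monotonic_def real_differentiable_def
  proof (intro conjI allI impI)
    fix K and y :: real assume "0 < y"
    show "\<exists>D. ((deriv ^^ K) (F 0) has_real_derivative D) (at y)"
      using deriv_cong[OF \<open>0 < y\<close> iter] by blast
    show "0 \<le> (-1) ^ K * (deriv ^^ K) (F 0) y"
      using iter nonneg \<open>0 < y\<close> by simp
  qed
qed

lemma completely_monotonic_monomial_sum_moments:
  fixes g :: "nat \<Rightarrow> real \<Rightarrow> real"
  assumes deriv: "\<And>p y. 0 < y \<Longrightarrow> (g p has_real_derivative - g (Suc p) y) (at y)"
    and moments: "\<And>y. 0 < y \<Longrightarrow> stieltjes_moment_sequence (\<lambda>p. g p y)"
    and "finite S"
    and poly_nonneg: "\<And>t. (\<And>i. i < N \<Longrightarrow> 0 < t i) \<Longrightarrow> 0 \<le> monomial_sum N S w e (\<lambda>i p. t i ^ p)"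
  shows "completely_monotonic (\<lambda>y. monomial_sum N S w e (\<lambda>_ p. g p y))"
proof -
  \<comment> \<open>the K-th derivative; up to its sign, the functional applied to the polynomial
    times \<open>(t 0 + \<dots> + t (N - 1)) ^ K\<close>\<close>
  define F where "F K y = (-1) ^ K * monomial_sum N (S \<times> index_lists K N) (w \<circ> fst)
    (\<lambda>(c, ls) i. e c i + count_list ls i) (\<lambda>_ p. g p y)" for K y
  have "(\<lambda>y. monomial_sum N S w e (\<lambda>_ p. g p y)) = F 0"
    unfolding fun_eq_iff F_def monomial_sum_index_lists by (simp add: monomial_sum_def)
  moreover have "(F K has_real_derivative F (Suc K) y) (at y)" if "0 < y" for K y
    unfolding F_def
    using DERIV_cmult[OF has_real_derivative_monomial_sum_index_lists[where g = g, OF deriv[OF that]]]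
    by simp
  moreover have "0 \<le> (-1) ^ K * F K y" if "0 < y" for K y
  proof -
    have "0 \<le> monomial_sum N (S \<times> index_lists K N) (w \<circ> fst)
        (\<lambda>(c, ls) i. e c i + count_list ls i) (\<lambda>_ p. g p y)"
    proof (rule monomial_sum_moments_nonneg[OF moments[OF that]])
      show "finite (S \<times> index_lists K N)"
        using \<open>finite S\<close> by (simp add: index_lists_def finite_lists_length_eq)
      fix t :: "nat \<Rightarrow> real" assume "\<And>i. i < N \<Longrightarrow> 0 < t i"
      then show "0 \<le> monomial_sum N (S \<times> index_lists K N) (w \<circ> fst)
          (\<lambda>(c, ls) i. e c i + count_list ls i) (\<lambda>i p. t i ^ p)"
        unfolding monomial_sum_index_lists_power
        by (intro mult_nonneg_nonneg poly_nonneg zero_le_power sum_nonneg less_imp_le) auto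
    qed
    then show ?thesis
      by (simp add: F_def flip: power_add mult_2)
  qed
  ultimately show ?thesis
    by (simp add: completely_monotonicI)
qed

lemma det_nat_scale_rows_cols:
  "det_nat N (\<lambda>i k. a i * b k * A i k) = (\<Prod>i<N. a i) * (\<Prod>i<N. b i) * det_nat N A"
proof -
  have "(\<Prod>i<N. a i * b (\<sigma> i) * A i (\<sigma> i)) = (\<Prod>i<N. a i) * (\<Prod>i<N. b i) * (\<Prod>i<N. A i (\<sigma> i))"
    if "\<sigma> permutes {..<N}" for \<sigma>
    using prod.permute[OF that, of b] by (simp add: prod.distrib comp_def)
  then show ?thesis
    unfolding det_nat_def sum_distrib_left by (intro sum.cong) (auto simp: mult_ac)
qed

lemma det_nat_alternating_signs:
  "(-1) ^ ((n + 1) * N) * det_nat N (\<lambda>i k. (-1) ^ (n + (i + k) * j + 1) * A i k) = det_nat N A"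
proof -
  have sq: "(-1 :: real) ^ r * (-1) ^ r = 1" for r
    by (simp flip: power_mult_distrib)
  have "(-1 :: real) ^ (n + (i + k) * j + 1) = (-1) ^ (n + 1) * (-1) ^ (i * j) * (-1) ^ (k * j)" for i k
    unfolding add_mult_distrib power_add by (simp add: mult_ac)
  then have "det_nat N (\<lambda>i k. (-1) ^ (n + (i + k) * j + 1) * A i k)
      = det_nat N (\<lambda>i k. ((-1) ^ (n + 1) * (-1) ^ (i * j)) * (-1) ^ (k * j) * A i k)"
    by (simp only:)
  also have "\<dots> = (\<Prod>i<N. (-1) ^ (n + 1) * (-1) ^ (i * j)) * (\<Prod>i<N. (-1) ^ (i * j)) * det_nat N A"
    by (rule det_nat_scale_rows_cols)
  also have "(\<Prod>i<N. (-1) ^ (n + 1) * (-1) ^ (i * j)) * (\<Prod>i<N. (-1) ^ (i * j)) = ((-1 :: real) ^ (n + 1)) ^ N"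
    by (simp add: prod.distrib mult.assoc sq flip: prod.distrib)
  finally show ?thesis
    by (simp only: power_mult[symmetric] mult.assoc[symmetric] sq mult_1_left)
qed

lemma det_nat_symmetrized:
  fixes N :: nat and A :: "nat \<Rightarrow> nat \<Rightarrow> real"
  defines "P \<equiv> {p. p permutes {..<N}}"
  shows "det_nat N A = (\<Sum>(\<alpha>, \<beta>)\<in>P \<times> P. of_int (sign \<alpha> * sign \<beta>) * (\<Prod>i<N. A (\<alpha> i) (\<beta> i))) / fact N"
proof -
  have "(\<Sum>\<beta>\<in>P. of_int (sign \<alpha> * sign \<beta>) * (\<Prod>i<N. A (\<alpha> i) (\<beta> i))) = det_nat N A" if "\<alpha> \<in> P" for \<alpha>
  proof -
    have \<alpha>: "\<alpha> permutes {..<N}" and inv: "inv \<alpha> permutes {..<N}"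
      using that permutes_inv by (auto simp: P_def)
    have "det_nat N A = (\<Sum>\<beta>\<in>P. of_int (sign (\<beta> \<circ> inv \<alpha>)) * (\<Prod>i<N. A i ((\<beta> \<circ> inv \<alpha>) i)))"
      unfolding det_nat_def P_def by (rule sum_permutations_compose_right[OF inv])
    also have "\<dots> = (\<Sum>\<beta>\<in>P. of_int (sign \<alpha> * sign \<beta>) * (\<Prod>i<N. A (\<alpha> i) (\<beta> i)))"
    proof (intro sum.cong refl)
      fix \<beta> assume "\<beta> \<in> P"
      then have \<beta>: "\<beta> permutes {..<N}"
        by (simp add: P_def)
      then have "sign (\<beta> \<circ> inv \<alpha>) = sign \<alpha> * sign \<beta>"
        using sign_compose[OF permutes_imp_permutation[OF _ \<beta>] permutes_imp_permutation[OF _ inv]]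
          sign_inverse[OF permutes_imp_permutation[OF _ \<alpha>]]
        by simp
      moreover have "(\<Prod>i<N. A i (\<beta> (inv \<alpha> i))) = (\<Prod>i<N. A (\<alpha> i) (\<beta> i))"
        using prod.permute[OF \<alpha>, of "\<lambda>i. A i (\<beta> (inv \<alpha> i))"] \<alpha>
        by (simp add: comp_def permutes_inverses(2))
      ultimately show "of_int (sign (\<beta> \<circ> inv \<alpha>)) * (\<Prod>i<N. A i ((\<beta> \<circ> inv \<alpha>) i))
          = of_int (sign \<alpha> * sign \<beta>) * (\<Prod>i<N. A (\<alpha> i) (\<beta> i))"
        by simp
    qed
    finally show ?thesis ..
  qed
  then have "(\<Sum>(\<alpha>, \<beta>)\<in>P \<times> P. of_int (sign \<alpha> * sign \<beta>) * (\<Prod>i<N. A (\<alpha> i) (\<beta> i)))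
      = (\<Sum>\<alpha>\<in>P. det_nat N A)"
    by (simp add: sum.cartesian_product[symmetric])
  also have "\<dots> = fact N * det_nat N A"
    using card_permutations[of "{..<N}" N] by (simp add: P_def)
  finally show ?thesis
    by simp
qed

definition hankel_weight :: "nat \<Rightarrow> (nat \<Rightarrow> nat) \<times> (nat \<Rightarrow> nat) \<Rightarrow> real" where
  "hankel_weight N = (\<lambda>(\<alpha>, \<beta>). of_int (sign \<alpha> * sign \<beta>) / fact N)"

definition hankel_exponent :: "nat \<Rightarrow> (nat \<Rightarrow> nat) \<times> (nat \<Rightarrow> nat) \<Rightarrow> nat \<Rightarrow> nat" where
  "hankel_exponent j = (\<lambda>(\<alpha>, \<beta>) i. (\<alpha> i + \<beta> i) * j)"

lemma monomial_sum_hankel: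
  fixes N j :: nat and h :: "nat \<Rightarrow> real"
  defines "P \<equiv> {p. p permutes {..<N}}"
  shows "monomial_sum N (P \<times> P) (hankel_weight N) (hankel_exponent j) (\<lambda>_. h)
           = det_nat N (\<lambda>i k. h ((i + k) * j))"
  unfolding det_nat_symmetrized[of N] monomial_sum_def hankel_weight_def hankel_exponent_def P_def
  by (simp add: sum_divide_distrib case_prod_unfold)

lemma monomial_sum_hankel_powers:
  fixes N j :: nat and t :: "nat \<Rightarrow> real"
  defines "P \<equiv> {p. p permutes {..<N}}"
  shows "monomial_sum N (P \<times> P) (hankel_weight N) (hankel_exponent j) (\<lambda>i p. t i ^ p)
           = (det_nat N (\<lambda>i k. t i ^ (k * j)))\<^sup>2 / fact N"
  unfolding det_nat_def power2_eq_square sum_product sum.cartesian_product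
    monomial_sum_def hankel_weight_def hankel_exponent_def P_def
  by (simp add: sum_divide_distrib case_prod_unfold add_mult_distrib add_mult_distrib2 power_add prod.distrib mult_ac)

lemma has_real_derivative_fact_barnes_zeta2:
  assumes "0 < y" and "2 \<le> q"
  shows "((\<lambda>y. fact q * barnes_zeta2 (Suc q) y) has_real_derivative
           - (fact (Suc q) * barnes_zeta2 (Suc (Suc q)) y)) (at y)"
  using DERIV_cmult[OF has_real_derivative_barnes_zeta2[OF assms(1), of "Suc q"], of "fact q"] assms(2)
  by (simp add: algebra_simps)

lemma signed_det_psi2_eq_monomial_sum:
  fixes n N j :: nat
  defines "P \<equiv> {p. p permutes {..<N}}"
  shows "(-1) ^ ((n + 1) * N) * det_nat N (\<lambda>i k. psi2 (n + (i + k) * j) y)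
           = monomial_sum N (P \<times> P) (hankel_weight N) (hankel_exponent j)
               (\<lambda>_ p. fact (n + p) * barnes_zeta2 (n + p + 1) y)"
proof -
  have "psi2 (n + p) y = (-1) ^ (n + p + 1) * (fact (n + p) * barnes_zeta2 (n + p + 1) y)" for p
    by (simp add: psi2_eq_barnes_zeta2)
  then show ?thesis
    unfolding P_def by (simp only: det_nat_alternating_signs monomial_sum_hankel)
qed

theorem proposition4p1:
  fixes n m j :: nat
  assumes "n \<ge> 2" and "m \<ge> 1" and "j \<ge> 1"
  shows "completely_monotonic
           (\<lambda>y. (-1) ^ ((n + 1) * (m + 1)) *
                 det_nat (m + 1) (\<lambda>i k. psi2 (n + (i + k) * j) y))"
proof -
  define N where "N = m + 1"
  define P where "P = {p. p permutes {..<N}}"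
  define g where "g p y = fact (n + p) * barnes_zeta2 (n + p + 1) y" for p y
  have "(\<lambda>y. (-1) ^ ((n + 1) * (m + 1)) * det_nat (m + 1) (\<lambda>i k. psi2 (n + (i + k) * j) y))
      = (\<lambda>y. monomial_sum N (P \<times> P) (hankel_weight N) (hankel_exponent j) (\<lambda>_ p. g p y))"
    by (simp only: N_def P_def g_def signed_det_psi2_eq_monomial_sum)
  moreover have "completely_monotonic
      (\<lambda>y. monomial_sum N (P \<times> P) (hankel_weight N) (hankel_exponent j) (\<lambda>_ p. g p y))"
  proof (rule completely_monotonic_monomial_sum_moments)
    show "(g p has_real_derivative - g (Suc p) y) (at y)" if "0 < y" for p y
      using has_real_derivative_fact_barnes_zeta2[OF that, of "n + p"] assms(1)
      by (simp add: g_def[abs_def])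
    show "stieltjes_moment_sequence (\<lambda>p. g p y)" if "0 < y" for y
      using stieltjes_moment_sequence_barnes_zeta2[OF that assms(1)] by (simp add: g_def)
    show "finite (P \<times> P)"
      by (simp add: P_def finite_permutations)
    show "0 \<le> monomial_sum N (P \<times> P) (hankel_weight N) (hankel_exponent j) (\<lambda>i p. t i ^ p)" for t
      unfolding P_def monomial_sum_hankel_powers by simp
  qed
  ultimately show ?thesis
    by simp
qed

end
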